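(* Let $q\ge5$ and let $\mathcal O$ be a $G_q$-orbit of $E_{n\Gamma}$-lines. Then $\Pi_{\overline{1_{\mathcal C}}}+2\Pi_{2_{\mathcal C}}+3\Pi_{3_{\mathcal C}}=q+1$ and $\Pi_{0_{\mathcal C}}=\Pi_{2_{\mathcal C}}+2\Pi_{3_{\mathcal C}}$ for all $q$; and if $q\not\equiv0\pmod3$, then $P_{1_\Gamma}+2P_T+3P_{3_\Gamma}=q+1$ and $P_{0_\Gamma}=P_T+2P_{3_\Gamma}$.
   Context: Let $\mathbb F_q$ be the field of order $q$ and $\mathrm{PG}(3,q)$ the projective space with points $\mathbf P(x_0,x_1,x_2,x_3)$. For $t\in\mathbb F_q$ put $P(t)=\mathbf P(t^3,t^2,t,1)$, and $P(\infty)=\mathbf P(1,0,0,0)$; the twisted cubic is $\mathcal C=\{P(t):t\in\mathbb F_q\cup\{\infty\}\}$ and $G_q$ is the group of projectivities fixing $\mathcal C$. The osculating plane at $P(t)$ is $x_0-3tx_1+3t^2x_2-t^3x_3=0$ ($t\in\mathbb F_q$) and $x_3=0$ at $P(\infty)$; these are the $\Gamma$-planes. The tangent at $P(t)$, $t\in\mathbb F_q$, is the line through $P(t)$ and $\mathbf P(3t^2,2t,1,0)$; at $P(\infty)$ it is the line through $\mathbf P(1,0,0,0),\mathbf P(0,1,0,0)$. A real chord joins two distinct points of $\mathcal C$; an imaginary chord joins $P(\tau),P(\tau^q)$, $\tau\in\mathbb F_{q^2}\setminus\mathbb F_q$; chords are real chords, tangents and imaginary chords. An axis is the intersection of two distinct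 osculating planes at points of $\mathcal C$, or of the osculating planes at conjugate points $P(\tau),P(\tau^q)$. An $E_{n\Gamma}$-line is a line with no point of $\mathcal C$, not contained in a $\Gamma$-plane, which is neither a chord nor an axis. Plane types: a $d_{\mathcal C}$-plane ($d\in\{0,2,3\}$) contains exactly $d$ points of $\mathcal C$; a $\overline{1_{\mathcal C}}$-plane is a non-$\Gamma$-plane containing exactly one point of $\mathcal C$. Point types for $q\not\equiv 0\pmod 3$: $T$-points are points off $\mathcal C$ on a tangent; $\mu_\Gamma$-points ($\mu\in\{0,1,3\}$) are points off $\mathcal C$ lying in exactly $\mu$ distinct $\Gamma$-planes. For a $G_q$-orbit $\mathcal O$ of lines, $\Pi_\pi$ = number of $\pi$-planes through a line of $\mathcal O$, $P_{\mathfrak p}$ = number of $\mathfrak p$-points on a line of $\mathcal O$ (independent of the line). *)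

theory Defs
  imports Main "HOL-Library.Cardinality"
begin

type_synonym 'a v4 = "'a \<times> 'a \<times> 'a \<times> 'a"

definition vzero :: "'a::field v4" where
  "vzero = (0, 0, 0, 0)"

definition vsc :: "'a::field \<Rightarrow> 'a v4 \<Rightarrow> 'a v4" where
  "vsc c v = (case v of (x0, x1, x2, x3) \<Rightarrow> (c * x0, c * x1, c * x2, c * x3))"

definition vadd :: "'a::field v4 \<Rightarrow> 'a v4 \<Rightarrow> 'a v4" where
  "vadd v w = (case v of (x0, x1, x2, x3) \<Rightarrow> case w of (y0, y1, y2, y3) \<Rightarrow>
      (x0 + y0, x1 + y1, x2 + y2, x3 + y3))"

definition vdot :: "'a::field v4 \<Rightarrow> 'a v4 \<Rightarrow> 'a" where
  "vdot f v = (case f of (a0, a1, a2, a3) \<Rightarrow> case v of (x0, x1, x2, x3) \<Rightarrow>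
      a0 * x0 + a1 * x1 + a2 * x2 + a3 * x3)"

definition vmap :: "('a \<Rightarrow> 'b) \<Rightarrow> 'a v4 \<Rightarrow> 'b v4" where
  "vmap h v = (case v of (x0, x1, x2, x3) \<Rightarrow> (h x0, h x1, h x2, h x3))"

text \<open>Points, lines, planes of PG(3,q) are the 1-, 2-, 3-dimensional subspaces of F^4
  (as sets of vectors); incidence is inclusion.\<close>

definition pg_point :: "'a::field v4 \<Rightarrow> 'a v4 set" where
  "pg_point v = {vsc c v | c. True}"

definition is_point :: "'a::field v4 set \<Rightarrow> bool" where
  "is_point S \<longleftrightarrow> (\<exists>v. v \<noteq> vzero \<and> S = pg_point v)"

definition indep2 :: "'a::field v4 \<Rightarrow> 'a v4 \<Rightarrow> bool" where
  "indep2 u w \<longleftrightarrow> (\<forall>a b. vadd (vsc a u) (vsc b w) = vzero \<longrightarrow> a = 0 \<and> b = 0)"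

definition pg_line :: "'a::field v4 \<Rightarrow> 'a v4 \<Rightarrow> 'a v4 set" where
  "pg_line u w = {vadd (vsc a u) (vsc b w) | a b. True}"

definition is_line :: "'a::field v4 set \<Rightarrow> bool" where
  "is_line L \<longleftrightarrow> (\<exists>u w. indep2 u w \<and> L = pg_line u w)"

definition pg_plane :: "'a::field v4 \<Rightarrow> 'a v4 set" where
  "pg_plane f = {x. vdot f x = 0}"

definition is_plane :: "'a::field v4 set \<Rightarrow> bool" where
  "is_plane S \<longleftrightarrow> (\<exists>f. f \<noteq> vzero \<and> S = pg_plane f)"

definition cvec :: "'a::field \<Rightarrow> 'a v4" where
  "cvec t = (t ^ 3, t ^ 2, t, 1)"

definition C_pt :: "'a::field \<Rightarrow> 'a v4 set" where
  "C_pt t = pg_point (cvec t)"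

definition C_inf :: "'a::field v4 set" where
  "C_inf = pg_point (1, 0, 0, 0)"

definition twisted_cubic :: "'a::field v4 set set" where
  "twisted_cubic = range C_pt \<union> {C_inf}"

definition osc_vec :: "'a::field \<Rightarrow> 'a v4" where
  "osc_vec t = (1, - 3 * t, 3 * t ^ 2, - (t ^ 3))"

definition Gamma_planes :: "'a::field v4 set set" where
  "Gamma_planes = range (\<lambda>t. pg_plane (osc_vec t)) \<union> {pg_plane (0, 0, 0, 1)}"

definition tangent :: "'a::field \<Rightarrow> 'a v4 set" where
  "tangent t = pg_line (cvec t) (3 * t ^ 2, 2 * t, 1, 0)"

definition tangent_inf :: "'a::field v4 set" where
  "tangent_inf = pg_line (1, 0, 0, 0) (0, 1, 0, 0)"

definition tangents :: "'a::field v4 set set" where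
  "tangents = range tangent \<union> {tangent_inf}"

text \<open>The quadratic extension F_{q^2} is given by a field embedding emb of F_q into a
  field 'b with q^2 elements; F_q is identified with range emb, and tau^q is the
  conjugate of tau.\<close>

definition field_embedding :: "('a::field \<Rightarrow> 'b::field) \<Rightarrow> bool" where
  "field_embedding emb \<longleftrightarrow> inj emb \<and> emb 1 = 1 \<and>
     (\<forall>x y. emb (x + y) = emb x + emb y) \<and> (\<forall>x y. emb (x * y) = emb x * emb y)"

definition real_chord :: "'a::field v4 set \<Rightarrow> bool" where
  "real_chord L \<longleftrightarrow> is_line L \<and>
     (\<exists>P Q. P \<in> twisted_cubic \<and> Q \<in> twisted_cubic \<and> P \<noteq> Q \<and> P \<subseteq> L \<and> Q \<subseteq> L)"

text \<open>Imaginary chord: the F_q-line whose extension to F_{q^2} contains P(tau), P(tau^q).\<close>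
definition imag_chord :: "('a::{finite,field} \<Rightarrow> 'b::field) \<Rightarrow> 'a v4 set \<Rightarrow> bool" where
  "imag_chord emb L \<longleftrightarrow> is_line L \<and>
     (\<exists>\<tau>. \<tau> \<notin> range emb \<and>
        (\<exists>u w. indep2 u w \<and> L = pg_line u w \<and>
           (\<exists>a b. cvec \<tau> = vadd (vsc a (vmap emb u)) (vsc b (vmap emb w))) \<and>
           (\<exists>a b. cvec (\<tau> ^ CARD('a)) = vadd (vsc a (vmap emb u)) (vsc b (vmap emb w)))))"

definition chord :: "('a::{finite,field} \<Rightarrow> 'b::field) \<Rightarrow> 'a v4 set \<Rightarrow> bool" where
  "chord emb L \<longleftrightarrow> real_chord L \<or> L \<in> tangents \<or> imag_chord emb L"

definition real_axis :: "'a::field v4 set \<Rightarrow> bool" where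
  "real_axis L \<longleftrightarrow> (\<exists>\<Pi>1 \<Pi>2. \<Pi>1 \<in> Gamma_planes \<and> \<Pi>2 \<in> Gamma_planes \<and> \<Pi>1 \<noteq> \<Pi>2 \<and> L = \<Pi>1 \<inter> \<Pi>2)"

text \<open>Imaginary axis: the F_q-line whose extension is the intersection of the osculating
  planes (over F_{q^2}) at P(tau), P(tau^q).\<close>
definition imag_axis :: "('a::{finite,field} \<Rightarrow> 'b::field) \<Rightarrow> 'a v4 set \<Rightarrow> bool" where
  "imag_axis emb L \<longleftrightarrow> is_line L \<and>
     (\<exists>\<tau>. \<tau> \<notin> range emb \<and>
        (\<forall>x\<in>L. vdot (osc_vec \<tau>) (vmap emb x) = 0 \<and>
               vdot (osc_vec (\<tau> ^ CARD('a))) (vmap emb x) = 0))"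

definition axis :: "('a::{finite,field} \<Rightarrow> 'b::field) \<Rightarrow> 'a v4 set \<Rightarrow> bool" where
  "axis emb L \<longleftrightarrow> real_axis L \<or> imag_axis emb L"

definition EnGamma_line :: "('a::{finite,field} \<Rightarrow> 'b::field) \<Rightarrow> 'a v4 set \<Rightarrow> bool" where
  "EnGamma_line emb L \<longleftrightarrow> is_line L \<and>
     (\<forall>P\<in>twisted_cubic. \<not> P \<subseteq> L) \<and>
     (\<forall>\<Pi>\<in>Gamma_planes. \<not> L \<subseteq> \<Pi>) \<and>
     \<not> chord emb L \<and> \<not> axis emb L"

definition nC :: "'a::field v4 set \<Rightarrow> nat" where
  "nC S = card {P \<in> twisted_cubic. P \<subseteq> S}"

definition Pi_dC :: "nat \<Rightarrow> 'a::field v4 set \<Rightarrow> nat" where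
  "Pi_dC d L = card {\<Pi>. is_plane \<Pi> \<and> L \<subseteq> \<Pi> \<and> nC \<Pi> = d}"

definition Pi_1barC :: "'a::field v4 set \<Rightarrow> nat" where
  "Pi_1barC L = card {\<Pi>. is_plane \<Pi> \<and> L \<subseteq> \<Pi> \<and> \<Pi> \<notin> Gamma_planes \<and> nC \<Pi> = 1}"

definition T_point :: "'a::field v4 set \<Rightarrow> bool" where
  "T_point P \<longleftrightarrow> is_point P \<and> P \<notin> twisted_cubic \<and> (\<exists>T\<in>tangents. P \<subseteq> T)"

definition mu_Gamma_point :: "nat \<Rightarrow> 'a::field v4 set \<Rightarrow> bool" where
  "mu_Gamma_point \<mu> P \<longleftrightarrow> is_point P \<and> P \<notin> twisted_cubic \<and>
     card {\<Pi> \<in> Gamma_planes. P \<subseteq> \<Pi>} = \<mu>"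

definition P_T :: "'a::field v4 set \<Rightarrow> nat" where
  "P_T L = card {P. T_point P \<and> P \<subseteq> L}"

definition P_muGamma :: "nat \<Rightarrow> 'a::field v4 set \<Rightarrow> nat" where
  "P_muGamma \<mu> L = card {P. mu_Gamma_point \<mu> P \<and> P \<subseteq> L}"

definition lin4 :: "('a::field v4 \<Rightarrow> 'a v4) \<Rightarrow> bool" where
  "lin4 g \<longleftrightarrow> (\<forall>x y. g (vadd x y) = vadd (g x) (g y)) \<and> (\<forall>c x. g (vsc c x) = vsc c (g x))"

definition Gq :: "('a::field v4 \<Rightarrow> 'a v4) set" where
  "Gq = {g. lin4 g \<and> bij g \<and> (\<lambda>P. g ` P) ` twisted_cubic = twisted_cubic}"

definition line_orbit :: "'a::field v4 set \<Rightarrow> 'a v4 set set" where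
  "line_orbit L = {g ` L | g. g \<in> Gq}"

definition is_Gq_line_orbit :: "'a::field v4 set set \<Rightarrow> bool" where
  "is_Gq_line_orbit Orb \<longleftrightarrow> (\<exists>L. is_line L \<and> Orb = line_orbit L)"

end

theory Submission
  imports Defs "HOL-Computational_Algebra.Polynomial" "HOL-Number_Theory.Residues"
begin

(* Let L be a line that contains no point of C and lies in no Gamma-plane.  Every point of C,
   being off L, spans with L exactly one of the q + 1 planes through L, and a plane meets C in the
   zeros of a binary cubic form, so in at most 3 points.  Hence the q + 1 planes through L carry
   weights nC in {0, 1, 2, 3} summing to |C| = q + 1; comparing this sum with the number of planes
   gives both identities for the Pi's.  Dually, each of the q + 1 Gamma-planes meets L in exactly
   one of its q + 1 points, and the Gamma-planes through a point x correspond to the zeros of the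
   binary cubic x0 - 3 t x1 + 3 t^2 x2 - t^3 x3.  When 3 is invertible this form is nonzero, so a
   point lies in at most three Gamma-planes, and in exactly two iff the form has a double root,
   i.e. iff the point lies on a tangent; the same count gives the identities for the P's. *)

lemma vdot_vsc [simp]: "vdot f (vsc c v) = c * vdot f v"
  by (cases f; cases v) (auto simp: vdot_def vsc_def algebra_simps)

lemma vdot_vadd [simp]: "vdot f (vadd v w) = vdot f v + vdot f w"
  by (cases f; cases v; cases w) (auto simp: vdot_def vadd_def algebra_simps)

lemma vdot_vsc_left [simp]: "vdot (vsc c f) x = c * vdot f x"
  by (cases f; cases x) (simp add: vdot_def vsc_def algebra_simps)

lemma vdot_vadd_left [simp]: "vdot (vadd f g) x = vdot f x + vdot g x"
  by (cases f; cases g; cases x) (simp add: vdot_def vadd_def algebra_simps)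

lemma vdot_vzero [simp]: "vdot f vzero = 0"
  by (cases f) (simp add: vdot_def vzero_def)

lemma vdot_vzero_left [simp]: "vdot vzero x = 0"
  by (cases x) (simp add: vdot_def vzero_def)

lemma vsc_vsc [simp]: "vsc a (vsc b v) = vsc (a * b) v"
  by (cases v) (auto simp: vsc_def)

lemma vsc_1 [simp]: "vsc 1 v = v"
  by (cases v) (auto simp: vsc_def)

lemma vsc_0 [simp]: "vsc 0 v = vzero"
  by (cases v) (auto simp: vsc_def vzero_def)

lemma vsc_vadd: "vsc c (vadd v w) = vadd (vsc c v) (vsc c w)"
  by (cases v; cases w) (auto simp: vsc_def vadd_def algebra_simps)

lemma vadd_vzero [simp]: "vadd vzero v = v" "vadd v vzero = v"
  by (cases v; simp add: vadd_def vzero_def)+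

lemma vzero_if_vdot_eq_0:
  fixes f :: "'a::field v4"
  assumes "\<And>x. vdot f x = 0"
  shows "f = vzero"
  using assms[of "(1,0,0,0)"] assms[of "(0,1,0,0)"] assms[of "(0,0,1,0)"] assms[of "(0,0,0,1)"]
  by (cases f) (simp add: vdot_def vzero_def)

lemma pg_point_mem: "v \<in> pg_point v"
  unfolding pg_point_def by (rule CollectI, rule exI[of _ 1]) simp

lemma pg_point_vsc: "(c::'a::field) \<noteq> 0 \<Longrightarrow> pg_point (vsc c v) = pg_point v"
  unfolding pg_point_def by (auto intro: exI[of _ "_ * c"] exI[of _ "_ / c"])

lemma pg_point_eqD: "pg_point v = pg_point v' \<Longrightarrow> \<exists>c. v' = vsc c v"
  using pg_point_mem[of v'] unfolding pg_point_def by auto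

lemma pg_point_subset_iff:
  assumes "\<And>c x. x \<in> S \<Longrightarrow> vsc c x \<in> S"
  shows "pg_point v \<subseteq> S \<longleftrightarrow> v \<in> S"
  using assms pg_point_mem unfolding pg_point_def by blast

lemma pg_point_subset_pg_plane_iff: "pg_point v \<subseteq> pg_plane f \<longleftrightarrow> vdot f v = 0"
  by (subst pg_point_subset_iff) (simp_all add: pg_plane_def)

lemma pg_line_lincomb: "vadd (vsc a u) (vsc b w) \<in> pg_line u w"
  unfolding pg_line_def by blast

lemma pg_line_vsc: "x \<in> pg_line u w \<Longrightarrow> vsc c x \<in> pg_line u w"
  unfolding pg_line_def by (auto simp: vsc_vadd) blast

lemma pg_point_subset_pg_line_iff: "pg_point v \<subseteq> pg_line u w \<longleftrightarrow> v \<in> pg_line u w"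
  using pg_point_subset_iff[OF pg_line_vsc] .

lemma pg_line_subset_pg_plane_iff:
  "pg_line u w \<subseteq> pg_plane f \<longleftrightarrow> vdot f u = 0 \<and> vdot f w = 0"
proof
  assume "pg_line u w \<subseteq> pg_plane f"
  moreover have "u \<in> pg_line u w" "w \<in> pg_line u w"
    using pg_line_lincomb[of 1 u 0 w] pg_line_lincomb[of 0 u 1 w] by simp_all
  ultimately show "vdot f u = 0 \<and> vdot f w = 0" by (auto simp: pg_plane_def)
qed (auto simp: pg_line_def pg_plane_def)

lemma indep2_lincomb_eq:
  assumes "indep2 u w" "vadd (vsc a u) (vsc b w) = vadd (vsc a' u) (vsc b' w)"
  shows "a = a' \<and> b = b'"
proof -
  have "vadd (vsc (a - a') u) (vsc (b - b') w) = vzero"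
    using assms(2) by (cases u; cases w) (simp add: vadd_def vsc_def vzero_def algebra_simps)
  then show ?thesis using assms(1) unfolding indep2_def by force
qed

lemma indep2_lincomb_neq_vzero:
  "indep2 u w \<Longrightarrow> (a, b) \<noteq> (0, 0) \<Longrightarrow> vadd (vsc a u) (vsc b w) \<noteq> vzero"
  unfolding indep2_def by auto

lemma proportional_pairs:
  fixes s t s' t' :: "'a::field"
  assumes "(s, t) \<noteq> (0, 0)" "s * t' = s' * t"
  shows "\<exists>c. s' = c * s \<and> t' = c * t"
proof (cases "s = 0")
  case True
  then show ?thesis using assms by (intro exI[of _ "t' / t"]) (auto simp: field_simps)
next
  case False
  then show ?thesis using assms by (intro exI[of _ "s' / s"]) (auto simp: field_simps)
qed

lemma card_homogeneous_image:
  fixes \<Phi> :: "'a::{finite,field} \<Rightarrow> 'a \<Rightarrow> 'c"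
  assumes scale: "\<And>a b c. c \<noteq> 0 \<Longrightarrow> \<Phi> (c * a) (c * b) = \<Phi> a b"
    and inj: "\<And>a b a' b'. (a, b) \<noteq> (0, 0) \<Longrightarrow> \<Phi> a b = \<Phi> a' b' \<Longrightarrow> \<exists>c. a' = c * a \<and> b' = c * b"
  shows "card {\<Phi> a b | a b. (a, b) \<noteq> (0, 0)} = CARD('a) + 1"
proof -
  have "\<Phi> a b \<in> insert (\<Phi> 0 1) (range (\<Phi> 1))" if "(a, b) \<noteq> (0, 0)" for a b
  proof (cases "a = 0")
    case True
    then show ?thesis using that scale[of b 0 1] by simp
  next
    case False
    then show ?thesis using scale[of a 1 "b / a"] by simp
  qed
  moreover have "(0::'a, 1::'a) \<noteq> (0, 0)" "(1::'a, x) \<noteq> (0, 0)" for x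
    by simp_all
  ultimately have "{\<Phi> a b | a b. (a, b) \<noteq> (0, 0)} = insert (\<Phi> 0 1) (range (\<Phi> 1))"
    by blast
  moreover have "inj (\<Phi> 1)"
  proof (rule injI)
    fix x y
    assume "\<Phi> 1 x = \<Phi> 1 y"
    then show "x = y" using inj[of 1 x 1 y] by auto
  qed
  moreover have "\<Phi> 0 1 \<notin> range (\<Phi> 1)"
  proof
    assume "\<Phi> 0 1 \<in> range (\<Phi> 1)"
    then obtain x where "\<Phi> 0 1 = \<Phi> 1 x" by auto
    then show False using inj[of 0 1 1 x] by auto
  qed
  ultimately show ?thesis by (simp add: card_image card_insert_disjoint)
qed

lemma card_homogeneous_image_linear_eq:
  fixes \<Phi> :: "'a::field \<Rightarrow> 'a \<Rightarrow> 'c"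
  assumes scale: "\<And>a b c. c \<noteq> 0 \<Longrightarrow> \<Phi> (c * a) (c * b) = \<Phi> a b"
    and nz: "(\<alpha>, \<beta>) \<noteq> (0, 0)"
  shows "card {\<Phi> a b | a b. (a, b) \<noteq> (0, 0) \<and> \<alpha> * a + \<beta> * b = 0} = 1"
proof -
  have "\<Phi> a b = \<Phi> \<beta> (- \<alpha>)" if ab: "(a, b) \<noteq> (0, 0)" "\<alpha> * a + \<beta> * b = 0" for a b
  proof -
    obtain c where c: "a = c * \<beta>" "b = c * - \<alpha>"
      using proportional_pairs[of \<beta> "- \<alpha>" b a] nz ab(2)
      by (auto simp: algebra_simps add_eq_0_iff2)
    then have "c \<noteq> 0" using ab(1) by auto
    then show ?thesis using scale[of c \<beta> "- \<alpha>"] c by simp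
  qed
  moreover have "(\<beta>, - \<alpha>) \<noteq> (0, 0)" "\<alpha> * \<beta> + \<beta> * - \<alpha> = 0"
    using nz by auto
  ultimately have "{\<Phi> a b | a b. (a, b) \<noteq> (0, 0) \<and> \<alpha> * a + \<beta> * b = 0} = {\<Phi> \<beta> (- \<alpha>)}"
    by blast
  then show ?thesis by simp
qed

context
  fixes u w :: "'a::{finite,field} v4"
  assumes indep: "indep2 u w"
begin

lemma points_on_pg_line:
  "{P. is_point P \<and> P \<subseteq> pg_line u w} =
     {pg_point (vadd (vsc a u) (vsc b w)) | a b. (a, b) \<noteq> (0, 0)}"
proof (intro equalityI subsetI)
  fix P
  assume "P \<in> {P. is_point P \<and> P \<subseteq> pg_line u w}"
  then obtain v where v: "v \<noteq> vzero" "P = pg_point v" "v \<in> pg_line u w"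
    unfolding is_point_def using pg_point_subset_pg_line_iff by blast
  then obtain a b where ab: "v = vadd (vsc a u) (vsc b w)"
    unfolding pg_line_def by blast
  with v(1) have "(a, b) \<noteq> (0, 0)" by auto
  with ab v(2) show "P \<in> {pg_point (vadd (vsc a u) (vsc b w)) | a b. (a, b) \<noteq> (0, 0)}"
    by blast
next
  fix P
  assume "P \<in> {pg_point (vadd (vsc a u) (vsc b w)) | a b. (a, b) \<noteq> (0, 0)}"
  then obtain a b where "(a, b) \<noteq> (0, 0)" "P = pg_point (vadd (vsc a u) (vsc b w))"
    by blast
  moreover from this have "is_point P"
    using indep2_lincomb_neq_vzero[OF indep] unfolding is_point_def by blast
  ultimately show "P \<in> {P. is_point P \<and> P \<subseteq> pg_line u w}"
    by (simp add: pg_point_subset_pg_line_iff pg_line_lincomb)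
qed

lemma pg_point_lincomb_scale:
  "c \<noteq> 0 \<Longrightarrow> pg_point (vadd (vsc (c * a) u) (vsc (c * b) w)) = pg_point (vadd (vsc a u) (vsc b w))"
  using pg_point_vsc[of c "vadd (vsc a u) (vsc b w)"] by (simp add: vsc_vadd)

lemma card_points_on_pg_line: "card {P. is_point P \<and> P \<subseteq> pg_line u w} = CARD('a) + 1"
  unfolding points_on_pg_line
proof (rule card_homogeneous_image, erule pg_point_lincomb_scale)
  fix a b a' b' :: 'a
  assume "pg_point (vadd (vsc a u) (vsc b w)) = pg_point (vadd (vsc a' u) (vsc b' w))"
  then obtain c where "vadd (vsc a' u) (vsc b' w) = vsc c (vadd (vsc a u) (vsc b w))"
    using pg_point_eqD by blast
  then have "vadd (vsc a' u) (vsc b' w) = vadd (vsc (c * a) u) (vsc (c * b) w)"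
    by (simp add: vsc_vadd)
  then show "\<exists>c. a' = c * a \<and> b' = c * b" using indep2_lincomb_eq[OF indep] by blast
qed

lemma card_points_on_pg_line_in_plane:
  assumes "\<not> pg_line u w \<subseteq> pg_plane f"
  shows "card {P. is_point P \<and> P \<subseteq> pg_line u w \<and> P \<subseteq> pg_plane f} = 1"
proof -
  have incident: "pg_point (vadd (vsc a u) (vsc b w)) \<subseteq> pg_plane f \<longleftrightarrow>
      vdot f u * a + vdot f w * b = 0" for a b
    by (simp add: pg_point_subset_pg_plane_iff mult.commute)
  have "{P. is_point P \<and> P \<subseteq> pg_line u w \<and> P \<subseteq> pg_plane f} =
      {P \<in> {P. is_point P \<and> P \<subseteq> pg_line u w}. P \<subseteq> pg_plane f}"
    by blast
  also have "\<dots> = {pg_point (vadd (vsc a u) (vsc b w)) | a b.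
      (a, b) \<noteq> (0, 0) \<and> pg_point (vadd (vsc a u) (vsc b w)) \<subseteq> pg_plane f}"
    unfolding points_on_pg_line by blast
  also have "\<dots> = {pg_point (vadd (vsc a u) (vsc b w)) | a b.
      (a, b) \<noteq> (0, 0) \<and> vdot f u * a + vdot f w * b = 0}"
    by (simp only: incident)
  also have "card \<dots> = 1"
  proof (rule card_homogeneous_image_linear_eq)
    show "(vdot f u, vdot f w) \<noteq> (0, 0)"
      using assms pg_line_subset_pg_plane_iff[of u w f] by auto
  qed (rule pg_point_lincomb_scale)
  finally show ?thesis .
qed

end

lemma card_points_on_line:
  fixes L :: "'a::{finite,field} v4 set"
  assumes "is_line L"
  shows "card {P. is_point P \<and> P \<subseteq> L} = CARD('a) + 1"
proof -
  obtain u w where "indep2 u w" "L = pg_line u w" using assms unfolding is_line_def by blast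
  then show ?thesis using card_points_on_pg_line by simp
qed

lemma card_points_on_line_in_plane:
  fixes L :: "'a::{finite,field} v4 set"
  assumes "is_line L" "is_plane E" "\<not> L \<subseteq> E"
  shows "card {P. is_point P \<and> P \<subseteq> L \<and> P \<subseteq> E} = 1"
proof -
  obtain u w where uw: "indep2 u w" "L = pg_line u w" using assms(1) unfolding is_line_def by blast
  obtain f where f: "E = pg_plane f" using assms(2) unfolding is_plane_def by blast
  show ?thesis
    unfolding uw(2) f by (rule card_points_on_pg_line_in_plane[OF uw(1)]) (use assms(3) uw(2) f in simp)
qed

section \<open>Planes through a line\<close>

text \<open>The cofactors of the last row of the 4 x 4 matrix with rows a, b, c.\<close>

definition cross4 :: "'a::field v4 \<Rightarrow> 'a v4 \<Rightarrow> 'a v4 \<Rightarrow> 'a v4" where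
  "cross4 a b c = (case a of (a0,a1,a2,a3) \<Rightarrow> case b of (b0,b1,b2,b3) \<Rightarrow> case c of (c0,c1,c2,c3) \<Rightarrow>
     (- (a1*(b2*c3 - b3*c2) - a2*(b1*c3 - b3*c1) + a3*(b1*c2 - b2*c1)),
      a0*(b2*c3 - b3*c2) - a2*(b0*c3 - b3*c0) + a3*(b0*c2 - b2*c0),
      - (a0*(b1*c3 - b3*c1) - a1*(b0*c3 - b3*c0) + a3*(b0*c1 - b1*c0)),
      a0*(b1*c2 - b2*c1) - a1*(b0*c2 - b2*c0) + a2*(b0*c1 - b1*c0)))"

definition det4 :: "'a::field v4 \<Rightarrow> 'a v4 \<Rightarrow> 'a v4 \<Rightarrow> 'a v4 \<Rightarrow> 'a" where
  "det4 a b c d = vdot (cross4 a b c) d"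

lemma det4_vadd [simp]: "det4 a b c (vadd x y) = det4 a b c x + det4 a b c y"
  by (simp add: det4_def)

lemma det4_vsc [simp]: "det4 a b c (vsc k x) = k * det4 a b c x"
  by (simp add: det4_def)

lemma det4_swap34: "det4 a b c d = - det4 a b d c"
  by (cases a; cases b; cases c; cases d) (simp add: det4_def cross4_def vdot_def algebra_simps)

lemma det4_repeated [simp]: "det4 a b c a = 0" "det4 a b c b = 0" "det4 a b c c = 0"
  by (cases a; cases b; cases c; simp add: det4_def cross4_def vdot_def algebra_simps)+

lemma det4_cramer:
  "vsc (det4 u w y z) x = vadd (vadd (vsc (det4 x w y z) u) (vsc (det4 u x y z) w))
                               (vadd (vsc (det4 u w x z) y) (vsc (det4 u w y x) z))"
  by (cases u; cases w; cases y; cases z; cases x)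
     (simp add: det4_def cross4_def vdot_def vsc_def vadd_def algebra_simps)

text \<open>If all determinants det(u, w, e_i, e_j) vanish, every 2 x 2 minor of (u; w) vanishes,
  so u and w are dependent.\<close>

lemma exists_det4_neq_0:
  fixes u w :: "'a::field v4"
  assumes "indep2 u w"
  shows "\<exists>y z. det4 u w y z \<noteq> 0"
proof (rule ccontr)
  assume "\<not> (\<exists>y z. det4 u w y z \<noteq> 0)"
  then have det0: "\<And>y z. det4 u w y z = 0" by auto
  obtain u0 u1 u2 u3 where u: "u = (u0,u1,u2,u3)" by (cases u) auto
  obtain w0 w1 w2 w3 where w: "w = (w0,w1,w2,w3)" by (cases w) auto
  have minors: "u0*w1 = u1*w0" "u0*w2 = u2*w0" "u0*w3 = u3*w0"
      "u1*w2 = u2*w1" "u1*w3 = u3*w1" "u2*w3 = u3*w2"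
    using det0[of "(0,0,1,0)" "(0,0,0,1)"] det0[of "(0,1,0,0)" "(0,0,0,1)"]
      det0[of "(0,1,0,0)" "(0,0,1,0)"] det0[of "(1,0,0,0)" "(0,0,0,1)"]
      det0[of "(1,0,0,0)" "(0,0,1,0)"] det0[of "(1,0,0,0)" "(0,1,0,0)"]
    by (simp_all add: u w det4_def cross4_def vdot_def algebra_simps)
  have "\<exists>a b. vadd (vsc a u) (vsc b w) = vzero \<and> (a \<noteq> 0 \<or> b \<noteq> 0)"
  proof -
    consider "u0 \<noteq> 0" | "u1 \<noteq> 0" | "u2 \<noteq> 0" | "u3 \<noteq> 0" | "u = vzero"
      by (auto simp: u vzero_def)
    then show ?thesis
    proof cases
      case 1
      then show ?thesis using minors
        by (intro exI[of _ w0] exI[of _ "- u0"]) (simp add: u w vadd_def vsc_def vzero_def algebra_simps)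
    next
      case 2
      then show ?thesis using minors
        by (intro exI[of _ w1] exI[of _ "- u1"]) (simp add: u w vadd_def vsc_def vzero_def algebra_simps)
    next
      case 3
      then show ?thesis using minors
        by (intro exI[of _ w2] exI[of _ "- u2"]) (simp add: u w vadd_def vsc_def vzero_def algebra_simps)
    next
      case 4
      then show ?thesis using minors
        by (intro exI[of _ w3] exI[of _ "- u3"]) (simp add: u w vadd_def vsc_def vzero_def algebra_simps)
    next
      case 5
      then show ?thesis by (intro exI[of _ 1] exI[of _ 0]) simp
    qed
  qed
  then show False using assms unfolding indep2_def by blast
qed

context
  fixes u w y z :: "'a::{finite,field} v4"
  assumes D: "det4 u w y z \<noteq> 0"
begin

definition pencil_normal :: "'a \<Rightarrow> 'a \<Rightarrow> 'a v4" where
  "pencil_normal s t = vadd (vsc s (cross4 u w y)) (vsc t (cross4 u w z))"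

lemma vdot_pencil_normal: "vdot (pencil_normal s t) x = s * det4 u w y x + t * det4 u w z x"
  by (simp add: pencil_normal_def det4_def)

lemma pencil_normal_neq_vzero:
  assumes "(s, t) \<noteq> (0, 0)"
  shows "pencil_normal s t \<noteq> vzero"
proof
  assume "pencil_normal s t = vzero"
  then have "vdot (pencil_normal s t) z = 0" "vdot (pencil_normal s t) y = 0" by simp_all
  then have "s * det4 u w y z = 0" "t * det4 u w y z = 0"
    by (simp_all add: vdot_pencil_normal det4_swap34[of u w z y])
  then show False using D assms by simp
qed

lemma planes_through_pg_line:
  "{E. is_plane E \<and> pg_line u w \<subseteq> E} = {pg_plane (pencil_normal s t) | s t. (s, t) \<noteq> (0, 0)}"
proof (intro equalityI subsetI)
  fix E
  assume "E \<in> {E. is_plane E \<and> pg_line u w \<subseteq> E}"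
  then obtain f where f: "f \<noteq> vzero" "E = pg_plane f" "pg_line u w \<subseteq> pg_plane f"
    unfolding is_plane_def by blast
  then have fuw: "vdot f u = 0" "vdot f w = 0" using pg_line_subset_pg_plane_iff by blast+
  have f_pencil: "det4 u w y z * vdot f x = vdot (pencil_normal (vdot f z) (- vdot f y)) x" for x
    using arg_cong[OF det4_cramer[of u w y z x], of "vdot f"] fuw
    by (simp add: vdot_pencil_normal det4_swap34[of u w x z] algebra_simps)
  have "(vdot f z, - vdot f y) \<noteq> (0, 0)"
  proof
    assume "(vdot f z, - vdot f y) = (0, 0)"
    then have "vdot f x = 0" for x using f_pencil[of x] D by (simp add: vdot_pencil_normal)
    then show False using vzero_if_vdot_eq_0 f(1) by blast
  qed
  moreover have "E = pg_plane (pencil_normal (vdot f z) (- vdot f y))"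
    unfolding f(2) pg_plane_def using f_pencil[symmetric] D by simp
  ultimately show "E \<in> {pg_plane (pencil_normal s t) | s t. (s, t) \<noteq> (0, 0)}" by blast
next
  fix E
  assume "E \<in> {pg_plane (pencil_normal s t) | s t. (s, t) \<noteq> (0, 0)}"
  then obtain s t where st: "(s, t) \<noteq> (0, 0)" "E = pg_plane (pencil_normal s t)" by blast
  then have "is_plane E" unfolding is_plane_def using pencil_normal_neq_vzero by blast
  moreover have "pg_line u w \<subseteq> E"
    unfolding st(2) pg_line_subset_pg_plane_iff by (simp add: vdot_pencil_normal)
  ultimately show "E \<in> {E. is_plane E \<and> pg_line u w \<subseteq> E}" by blast
qed

lemma pg_plane_pencil_normal_scale:
  assumes "c \<noteq> 0"
  shows "pg_plane (pencil_normal (c * s) (c * t)) = pg_plane (pencil_normal s t)"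
proof -
  have "vdot (pencil_normal (c * s) (c * t)) x = c * vdot (pencil_normal s t) x" for x
    by (simp add: vdot_pencil_normal algebra_simps)
  then show ?thesis using assms by (simp add: pg_plane_def)
qed

lemma card_planes_through_pg_line:
  "card {E. is_plane E \<and> pg_line u w \<subseteq> E} = CARD('a) + 1"
  unfolding planes_through_pg_line
proof (rule card_homogeneous_image, erule pg_plane_pencil_normal_scale)
  fix s t s' t' :: 'a
  assume st: "(s, t) \<noteq> (0, 0)" and eq: "pg_plane (pencil_normal s t) = pg_plane (pencil_normal s' t')"
  define x where "x = vadd (vsc s y) (vsc t z)"
  have vdot_x: "vdot (pencil_normal a b) x = (a * t - b * s) * det4 u w y z" for a b
    unfolding x_def vdot_pencil_normal by (simp add: det4_swap34[of u w z y] algebra_simps)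
  have "x \<in> pg_plane (pencil_normal s t)" by (simp add: pg_plane_def vdot_x)
  then have "x \<in> pg_plane (pencil_normal s' t')" using eq by simp
  then have "s * t' = s' * t" using D by (simp add: pg_plane_def vdot_x algebra_simps)
  then show "\<exists>c. s' = c * s \<and> t' = c * t" using proportional_pairs[OF st] by blast
qed

lemma card_planes_through_pg_line_and_point:
  assumes "v \<notin> pg_line u w"
  shows "card {E. is_plane E \<and> pg_line u w \<subseteq> E \<and> pg_point v \<subseteq> E} = 1"
proof -
  define \<alpha> where "\<alpha> = det4 u w y v"
  define \<beta> where "\<beta> = det4 u w z v"
  have "(\<alpha>, \<beta>) \<noteq> (0, 0)"
  proof
    assume "(\<alpha>, \<beta>) = (0, 0)"
    then have "vsc (det4 u w y z) v = vadd (vsc (det4 v w y z) u) (vsc (det4 u v y z) w)"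
      using det4_cramer[of u w y z v] det4_swap34[of u w v z] by (simp add: \<alpha>_def \<beta>_def)
    then have "vsc (inverse (det4 u w y z)) (vsc (det4 u w y z) v) \<in> pg_line u w"
      by (metis pg_line_vsc pg_line_lincomb)
    then show False using assms D by simp
  qed
  have incident: "pg_point v \<subseteq> pg_plane (pencil_normal s t) \<longleftrightarrow> \<alpha> * s + \<beta> * t = 0" for s t
    by (simp add: pg_point_subset_pg_plane_iff vdot_pencil_normal \<alpha>_def \<beta>_def mult.commute)
  have "{E. is_plane E \<and> pg_line u w \<subseteq> E \<and> pg_point v \<subseteq> E} =
      {E \<in> {E. is_plane E \<and> pg_line u w \<subseteq> E}. pg_point v \<subseteq> E}"
    by blast
  also have "\<dots> = {pg_plane (pencil_normal s t) | s t.
      (s, t) \<noteq> (0, 0) \<and> pg_point v \<subseteq> pg_plane (pencil_normal s t)}"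
    unfolding planes_through_pg_line by blast
  also have "\<dots> = {pg_plane (pencil_normal s t) | s t. (s, t) \<noteq> (0, 0) \<and> \<alpha> * s + \<beta> * t = 0}"
    by (simp only: incident)
  also have "card \<dots> = 1"
    by (rule card_homogeneous_image_linear_eq) (fact pg_plane_pencil_normal_scale, fact)
  finally show ?thesis .
qed

end

lemma card_planes_through_line:
  fixes L :: "'a::{finite,field} v4 set"
  assumes "is_line L"
  shows "card {E. is_plane E \<and> L \<subseteq> E} = CARD('a) + 1"
proof -
  obtain u w where uw: "indep2 u w" "L = pg_line u w" using assms unfolding is_line_def by blast
  obtain y z where "det4 u w y z \<noteq> 0" using exists_det4_neq_0[OF uw(1)] by blast
  then show ?thesis using card_planes_through_pg_line uw(2) by simp
qed

lemma card_planes_through_line_and_point: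
  fixes L :: "'a::{finite,field} v4 set"
  assumes "is_line L" "is_point P" "\<not> P \<subseteq> L"
  shows "card {E. is_plane E \<and> L \<subseteq> E \<and> P \<subseteq> E} = 1"
proof -
  obtain u w where uw: "indep2 u w" "L = pg_line u w" using assms(1) unfolding is_line_def by blast
  obtain y z where D: "det4 u w y z \<noteq> 0" using exists_det4_neq_0[OF uw(1)] by blast
  obtain v where v: "P = pg_point v" using assms(2) unfolding is_point_def by blast
  have "v \<notin> pg_line u w" using assms(3) uw(2) v pg_point_subset_pg_line_iff by blast
  then show ?thesis using card_planes_through_pg_line_and_point[OF D] uw(2) v by simp
qed

section \<open>The twisted cubic and its osculating planes\<close>

lemma card_filter_range_insert:
  fixes \<Phi> :: "'a::finite \<Rightarrow> 'b"
  assumes "inj \<Phi>" "c \<notin> range \<Phi>"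
  shows "card {Y \<in> range \<Phi> \<union> {c}. Q Y} = card {t. Q (\<Phi> t)} + (if Q c then 1 else 0)"
proof -
  have "{Y \<in> range \<Phi> \<union> {c}. Q Y} = (if Q c then insert c else id) (\<Phi> ` {t. Q (\<Phi> t)})"
    by auto
  moreover have "card (\<Phi> ` {t. Q (\<Phi> t)}) = card {t. Q (\<Phi> t)}"
    using assms(1) by (simp add: card_image inj_on_subset)
  moreover have "c \<notin> \<Phi> ` {t. Q (\<Phi> t)}" using assms(2) by auto
  ultimately show ?thesis by (simp add: card_insert_disjoint)
qed

lemma inj_C_pt: "inj (C_pt :: 'a::field \<Rightarrow> 'a v4 set)"
proof (rule injI)
  fix s t :: 'a
  assume "C_pt s = C_pt t"
  then obtain c where "cvec t = vsc c (cvec s)" unfolding C_pt_def using pg_point_eqD by blast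
  then show "s = t" by (simp add: cvec_def vsc_def)
qed

lemma C_inf_notin_range_C_pt: "C_inf \<notin> range (C_pt :: 'a::field \<Rightarrow> 'a v4 set)"
proof
  assume "C_inf \<in> range (C_pt :: 'a \<Rightarrow> 'a v4 set)"
  then obtain t :: 'a where "C_pt t = C_inf" by auto
  then obtain c where "(1, 0, 0, 0) = vsc c (cvec t)"
    unfolding C_pt_def C_inf_def using pg_point_eqD by metis
  then show False by (auto simp: cvec_def vsc_def)
qed

lemma card_twisted_cubic: "card (twisted_cubic :: 'a::{finite,field} v4 set set) = CARD('a) + 1"
proof -
  have tc: "(twisted_cubic :: 'a v4 set set) = {Y \<in> range C_pt \<union> {C_inf}. True}"
    by (auto simp: twisted_cubic_def)
  show ?thesis
    unfolding tc card_filter_range_insert[OF inj_C_pt C_inf_notin_range_C_pt] by simp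
qed

lemma is_point_if_mem_twisted_cubic:
  assumes "P \<in> twisted_cubic"
  shows "is_point P"
proof -
  have "cvec t \<noteq> vzero" "(1, 0, 0, 0) \<noteq> vzero" for t :: 'a
    by (simp_all add: cvec_def vzero_def)
  then show ?thesis using assms unfolding twisted_cubic_def C_pt_def C_inf_def is_point_def by blast
qed

lemma nC_pg_plane:
  fixes f :: "'a::{finite,field} v4"
  shows "nC (pg_plane f) = card {t. vdot f (cvec t) = 0} + (if vdot f (1, 0, 0, 0) = 0 then 1 else 0)"
  using card_filter_range_insert[OF inj_C_pt C_inf_notin_range_C_pt, of "\<lambda>P. P \<subseteq> pg_plane f"]
  by (simp add: nC_def twisted_cubic_def C_pt_def C_inf_def pg_point_subset_pg_plane_iff)

text \<open>The left-hand side counts the zeros of the binary cubic form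
  a0 Y^3 + a1 X Y^2 + a2 X^2 Y + a3 X^3 on the projective line; (1 : 0) is a zero iff a3 = 0.\<close>

lemma card_roots_cubic_le_3:
  fixes a0 a1 a2 a3 :: "'a::field"
  assumes "(a0, a1, a2, a3) \<noteq> (0, 0, 0, 0)"
  shows "card {t. poly [:a0, a1, a2, a3:] t = 0} + (if a3 = 0 then 1 else 0) \<le> 3"
proof (cases "a3 = 0")
  case True
  then have "[:a0, a1, a2:] \<noteq> 0" using assms by auto
  then have "card {t. poly [:a0, a1, a2:] t = 0} \<le> degree [:a0, a1, a2:]"
    by (rule card_poly_roots_bound)
  also have "\<dots> \<le> 2" by (simp add: degree_pCons_eq_if)
  finally show ?thesis using True by simp
next
  case False
  then have "[:a0, a1, a2, a3:] \<noteq> 0" by simp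
  then have "card {t. poly [:a0, a1, a2, a3:] t = 0} \<le> degree [:a0, a1, a2, a3:]"
    by (rule card_poly_roots_bound)
  also have "\<dots> \<le> 3" by (simp add: degree_pCons_eq_if)
  finally show ?thesis using False by simp
qed

lemma nC_le_3:
  fixes E :: "'a::{finite,field} v4 set"
  assumes "is_plane E"
  shows "nC E \<le> 3"
proof -
  obtain f0 f1 f2 f3 where f: "(f0, f1, f2, f3) \<noteq> vzero" "E = pg_plane (f0, f1, f2, f3)"
    using assms unfolding is_plane_def by auto
  have "vdot (f0, f1, f2, f3) (cvec t) = poly [:f3, f2, f1, f0:] t" for t
    by (simp add: vdot_def cvec_def algebra_simps power2_eq_square power3_eq_cube)
  moreover have "(f3, f2, f1, f0) \<noteq> (0, 0, 0, 0)" using f(1) by (auto simp: vzero_def)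
  ultimately show ?thesis
    using card_roots_cubic_le_3[of f3 f2 f1 f0] by (simp add: f(2) nC_pg_plane vdot_def)
qed

lemma vdot_osc_vec_cvec: "vdot (osc_vec t) (cvec s) = (s - t) ^ 3"
  by (simp add: vdot_def osc_vec_def cvec_def algebra_simps power2_eq_square power3_eq_cube)

lemma vdot_osc_vec: "vdot (osc_vec t) (x0, x1, x2, x3) = x0 - 3*t*x1 + 3*t^2*x2 - t^3*x3"
  by (simp add: vdot_def osc_vec_def algebra_simps)

lemma inj_osculating_plane: "inj (\<lambda>t::'a::field. pg_plane (osc_vec t))"
proof (rule injI)
  fix s t :: 'a
  assume "pg_plane (osc_vec s) = pg_plane (osc_vec t)"
  moreover have "cvec s \<in> pg_plane (osc_vec s)" by (simp add: pg_plane_def vdot_osc_vec_cvec)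
  ultimately have "cvec s \<in> pg_plane (osc_vec t)" by simp
  then show "s = t" by (simp add: pg_plane_def vdot_osc_vec_cvec)
qed

lemma osculating_plane_inf_notin_range:
  "pg_plane (0, 0, 0, 1) \<notin> range (\<lambda>t::'a::field. pg_plane (osc_vec t))"
proof
  assume "pg_plane (0, 0, 0, 1) \<in> range (\<lambda>t::'a. pg_plane (osc_vec t))"
  then obtain t :: 'a where "pg_plane (osc_vec t) = pg_plane (0, 0, 0, 1)" by auto
  moreover have "cvec t \<in> pg_plane (osc_vec t)" by (simp add: pg_plane_def vdot_osc_vec_cvec)
  ultimately show False by (simp add: pg_plane_def cvec_def vdot_def)
qed

lemma card_Gamma_planes: "card (Gamma_planes :: 'a::{finite,field} v4 set set) = CARD('a) + 1"
proof -
  have \<Gamma>: "(Gamma_planes :: 'a v4 set set) =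
      {Y \<in> range (\<lambda>t. pg_plane (osc_vec t)) \<union> {pg_plane (0, 0, 0, 1)}. True}"
    by (auto simp: Gamma_planes_def)
  show ?thesis
    unfolding \<Gamma> card_filter_range_insert[OF inj_osculating_plane osculating_plane_inf_notin_range]
    by simp
qed

lemma is_plane_if_mem_Gamma_planes:
  assumes "E \<in> Gamma_planes"
  shows "is_plane E"
proof -
  have "osc_vec t \<noteq> vzero" "(0, 0, 0, 1) \<noteq> vzero" for t :: 'a
    by (simp_all add: osc_vec_def vzero_def)
  then show ?thesis using assms unfolding Gamma_planes_def is_plane_def by blast
qed

lemma card_Gamma_planes_through_point:
  fixes x :: "'a::{finite,field} v4"
  shows "card {E \<in> Gamma_planes. pg_point x \<subseteq> E} =
    card {t. vdot (osc_vec t) x = 0} + (if vdot (0, 0, 0, 1) x = 0 then 1 else 0)"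
  using card_filter_range_insert[OF inj_osculating_plane osculating_plane_inf_notin_range,
      of "\<lambda>E. pg_point x \<subseteq> E"]
  by (simp add: Gamma_planes_def pg_point_subset_pg_plane_iff)

lemma card_Gamma_planes_through_point_le_3:
  fixes P :: "'a::{finite,field} v4 set"
  assumes "(3::'a) \<noteq> 0" "is_point P"
  shows "card {E \<in> Gamma_planes. P \<subseteq> E} \<le> 3"
proof -
  obtain x0 x1 x2 x3 where x: "(x0, x1, x2, x3) \<noteq> vzero" "P = pg_point (x0, x1, x2, x3)"
    using assms(2) unfolding is_point_def by auto
  have "vdot (osc_vec t) (x0, x1, x2, x3) = poly [:x0, -3*x1, 3*x2, -x3:] t" for t
    by (simp add: vdot_osc_vec algebra_simps power2_eq_square power3_eq_cube)
  moreover have "(x0, -3*x1, 3*x2, -x3) \<noteq> (0, 0, 0, 0)" using x(1) assms(1) by (auto simp: vzero_def)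
  ultimately show ?thesis
    using card_roots_cubic_le_3[of x0 "-3*x1" "3*x2" "-x3"]
    by (simp add: x(2) card_Gamma_planes_through_point vdot_def)
qed

section \<open>Points on tangents\<close>

lemma vdot_osc_vec_tangent_point:
  "vdot (osc_vec t) (vadd (vsc \<alpha> (cvec a)) (vsc \<beta> (3*a^2, 2*a, 1, 0))) =
     (a - t)^2 * (\<alpha> * (a - t) + 3 * \<beta>)"
  by (simp add: vdot_def osc_vec_def cvec_def vadd_def vsc_def algebra_simps
      power2_eq_square power3_eq_cube)

lemma vdot_e3: "vdot (0, 0, 0, 1) (x0, x1, x2, x3) = x3"
  by (simp add: vdot_def)

lemma two_Gamma_planes_through_tangent_point:
  fixes a \<alpha> \<beta> :: "'a::{finite,field}"
  assumes "(3::'a) \<noteq> 0" "\<beta> \<noteq> 0"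
  shows "card {E \<in> Gamma_planes. pg_point (vadd (vsc \<alpha> (cvec a)) (vsc \<beta> (3*a^2, 2*a, 1, 0))) \<subseteq> E} = 2"
proof -
  let ?x = "vadd (vsc \<alpha> (cvec a)) (vsc \<beta> (3*a^2, 2*a, 1, 0))"
  have x3: "vdot (0, 0, 0, 1) ?x = \<alpha>"
    by (simp add: vdot_def cvec_def vadd_def vsc_def)
  show ?thesis
  proof (cases "\<alpha> = 0")
    case True
    then have "vdot (osc_vec t) ?x = 0 \<longleftrightarrow> t = a" for t
      unfolding vdot_osc_vec_tangent_point using assms by auto
    then have roots: "{t. vdot (osc_vec t) ?x = 0} = {a}" by auto
    show ?thesis using True unfolding card_Gamma_planes_through_point x3 roots by simp
  next
    case False
    then have "\<alpha> * (a - t) + 3 * \<beta> = 0 \<longleftrightarrow> t = a + 3 * \<beta> / \<alpha>" for t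
      by (auto simp: field_simps)
    then have "vdot (osc_vec t) ?x = 0 \<longleftrightarrow> t = a \<or> t = a + 3 * \<beta> / \<alpha>" for t
      unfolding vdot_osc_vec_tangent_point by auto
    then have roots: "{t. vdot (osc_vec t) ?x = 0} = {a, a + 3 * \<beta> / \<alpha>}" by auto
    have "a \<noteq> a + 3 * \<beta> / \<alpha>" using False assms by simp
    then show ?thesis using False unfolding card_Gamma_planes_through_point x3 roots by simp
  qed
qed

lemma two_Gamma_planes_through_tangent_inf_point:
  fixes \<alpha> \<beta> :: "'a::{finite,field}"
  assumes "(3::'a) \<noteq> 0" "\<beta> \<noteq> 0"
  shows "card {E \<in> Gamma_planes. pg_point (\<alpha>, \<beta>, 0, 0) \<subseteq> E} = 2"
proof -
  have "vdot (osc_vec t) (\<alpha>, \<beta>, 0, 0) = 0 \<longleftrightarrow> t = \<alpha> / (3 * \<beta>)" for t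
    using assms by (auto simp: vdot_osc_vec field_simps)
  then have "{t. vdot (osc_vec t) (\<alpha>, \<beta>, 0, 0) = 0} = {\<alpha> / (3 * \<beta>)}" by auto
  then show ?thesis by (simp add: card_Gamma_planes_through_point vdot_e3)
qed

text \<open>The hypotheses say that a is a double root of t \<mapsto> vdot (osc_vec t) (x0, x1, x2, x3);
  the second one is its derivative at a, divided by -3.\<close>

lemma mem_tangent_if_double_root:
  assumes "x0 - 3*a*x1 + 3*a^2*x2 - a^3*x3 = 0" "x1 = 2*a*x2 - a^2*x3"
  shows "(x0, x1, x2, x3) \<in> tangent a"
proof -
  have "x0 = 3*a^2*x2 - 2*a^3*x3"
    using assms by (simp add: algebra_simps power2_eq_square power3_eq_cube)
  then have "(x0, x1, x2, x3) = vadd (vsc x3 (cvec a)) (vsc (x2 - a*x3) (3*a^2, 2*a, 1, 0))"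
    using assms(2) by (simp add: vadd_def vsc_def cvec_def algebra_simps power2_eq_square power3_eq_cube)
  then show ?thesis unfolding tangent_def by (simp add: pg_line_lincomb)
qed

lemma mem_tangents_if_unique_root:
  assumes roots: "{t. vdot (osc_vec t) (x0, x1, x2, 0) = 0} = {a}"
  shows "\<exists>T\<in>tangents. (x0, x1, x2, 0) \<in> T"
proof (cases "x2 = 0")
  case True
  then have "(x0, x1, x2, 0) = vadd (vsc x0 (1, 0, 0, 0)) (vsc x1 (0, 1, 0, 0))"
    by (simp add: vadd_def vsc_def)
  then have "(x0, x1, x2, 0) \<in> tangent_inf" unfolding tangent_inf_def by (simp add: pg_line_lincomb)
  then show ?thesis unfolding tangents_def by blast
next
  case False
  define b where "b = x1 / x2 - a"
  have sum_roots: "x2 * (a + b) = x1" using False by (simp add: b_def field_simps)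
  have "vdot (osc_vec a) (x0, x1, x2, 0) = 0" using roots by blast
  then have root_a: "x0 - 3*a*x1 + 3*a^2*x2 - a^3*0 = 0" by (simp only: vdot_osc_vec)
  have "vdot (osc_vec b) (x0, x1, x2, 0) =
      (x0 - 3*a*x1 + 3*a^2*x2 - a^3*0) + (b - a) * (3 * (x2 * (a + b)) - 3 * x1)"
    by (simp add: vdot_osc_vec algebra_simps power2_eq_square)
  also have "\<dots> = 0" using root_a sum_roots by simp
  finally have "b = a" using roots by blast
  then have "x1 = 2*a*x2 - a^2*0" using sum_roots by (simp add: algebra_simps)
  then show ?thesis using mem_tangent_if_double_root[OF root_a] unfolding tangents_def by blast
qed

text \<open>With two distinct roots a, b the cubic, whose roots sum to 3 x2 / x3, also vanishes at
  c = 3 x2 / x3 - a - b; hence c is one of a, b and is a double root.\<close>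

lemma mem_tangents_if_two_roots:
  fixes x0 x1 x2 x3 a b :: "'a::field"
  assumes three: "(3::'a) \<noteq> 0" and "x3 \<noteq> 0" "a \<noteq> b"
    and roots: "{t. vdot (osc_vec t) (x0, x1, x2, x3) = 0} = {a, b}"
  shows "\<exists>T\<in>tangents. (x0, x1, x2, x3) \<in> T"
proof -
  define c where "c = 3*x2/x3 - a - b"
  have sum_roots: "3*x2 = x3 * (a + b + c)" using \<open>x3 \<noteq> 0\<close> by (simp add: c_def field_simps)
  define \<gamma> where "\<gamma> = x3 * (a*b + b*c + c*a) - 3*x1"
  define \<delta> where "\<delta> = x0 - x3*a*b*c"
  have factor: "vdot (osc_vec t) (x0, x1, x2, x3) = \<gamma> * t + \<delta> - x3 * (t - a) * (t - b) * (t - c)" for t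
  proof -
    have "vdot (osc_vec t) (x0, x1, x2, x3) - (\<gamma> * t + \<delta> - x3 * (t - a) * (t - b) * (t - c)) =
        t^2 * (3*x2 - x3 * (a + b + c))"
      unfolding \<gamma>_def \<delta>_def vdot_osc_vec by (simp add: algebra_simps power2_eq_square power3_eq_cube)
    then show ?thesis using sum_roots by simp
  qed
  have "vdot (osc_vec a) (x0, x1, x2, x3) = 0" "vdot (osc_vec b) (x0, x1, x2, x3) = 0"
    using roots by blast+
  then have "\<gamma> * a + \<delta> = 0" "\<gamma> * b + \<delta> = 0" using factor[of a] factor[of b] by simp_all
  moreover have "\<gamma> * (a - b) = (\<gamma> * a + \<delta>) - (\<gamma> * b + \<delta>)" by (simp add: algebra_simps)
  ultimately have "\<gamma> * (a - b) = 0" by simp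
  then have "\<gamma> = 0" "\<delta> = 0" using \<open>a \<noteq> b\<close> \<open>\<gamma> * a + \<delta> = 0\<close> by auto
  then have "vdot (osc_vec c) (x0, x1, x2, x3) = 0" using factor[of c] by simp
  then have "c = a \<or> c = b" and root_c: "x0 - 3*c*x1 + 3*c^2*x2 - c^3*x3 = 0"
    using roots by (blast, simp only: vdot_osc_vec)
  have sum_products: "3*x1 = x3 * (a*b + b*c + c*a)" using \<open>\<gamma> = 0\<close> by (simp add: \<gamma>_def)
  have "3 * (x1 - (2*c*x2 - c^2*x3)) = 3*x1 - 2*c*(3*x2) + 3*c^2*x3"
    by (simp add: algebra_simps)
  also have "\<dots> = x3 * (a*b + b*c + c*a) - 2*c*(x3 * (a + b + c)) + 3*c^2*x3"
    by (simp only: sum_products sum_roots)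
  also have "\<dots> = x3 * (c - a) * (c - b)"
    by (simp add: algebra_simps power2_eq_square)
  also have "\<dots> = 0" using \<open>c = a \<or> c = b\<close> by auto
  finally have "x1 = 2*c*x2 - c^2*x3" using three by (metis mult_eq_0_iff right_minus_eq)
  then show ?thesis using mem_tangent_if_double_root[OF root_c] unfolding tangents_def by blast
qed

lemma mem_tangents_if_two_Gamma_planes:
  fixes x :: "'a::{finite,field} v4"
  assumes "(3::'a) \<noteq> 0" "card {E \<in> Gamma_planes. pg_point x \<subseteq> E} = 2"
  shows "\<exists>T\<in>tangents. x \<in> T"
proof -
  obtain x0 x1 x2 x3 where x: "x = (x0, x1, x2, x3)" by (cases x) auto
  have count: "card {t. vdot (osc_vec t) (x0, x1, x2, x3) = 0} + (if x3 = 0 then 1 else 0) = 2"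
    using assms(2) unfolding x card_Gamma_planes_through_point vdot_e3 .
  show ?thesis
  proof (cases "x3 = 0")
    case True
    then have "card {t. vdot (osc_vec t) (x0, x1, x2, 0) = 0} = 1" using count by simp
    then obtain a where "{t. vdot (osc_vec t) (x0, x1, x2, 0) = 0} = {a}"
      by (rule card_1_singletonE)
    then show ?thesis using mem_tangents_if_unique_root True x by blast
  next
    case False
    then obtain a b where "a \<noteq> b" "{t. vdot (osc_vec t) (x0, x1, x2, x3) = 0} = {a, b}"
      using count by (auto simp: card_2_iff)
    then show ?thesis using mem_tangents_if_two_roots assms(1) False x by blast
  qed
qed

lemma two_Gamma_planes_if_T_point:
  fixes P :: "'a::{finite,field} v4 set"
  assumes "(3::'a) \<noteq> 0" "T_point P"
  shows "card {E \<in> Gamma_planes. P \<subseteq> E} = 2"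
proof -
  obtain x T where x: "x \<noteq> vzero" "P = pg_point x" and T: "T \<in> tangents" "x \<in> T"
    and off_C: "P \<notin> twisted_cubic"
    using assms(2) pg_point_mem unfolding T_point_def is_point_def by blast
  have on_C: "pg_point (vsc \<alpha> v) \<in> twisted_cubic" if "\<alpha> \<noteq> 0" "pg_point v \<in> twisted_cubic" for \<alpha> v
    using pg_point_vsc[OF that(1)] that(2) by simp
  consider (finite) a where "T = tangent a" | (infinite) "T = tangent_inf"
    using T(1) unfolding tangents_def by blast
  then show ?thesis
  proof cases
    case finite
    then obtain \<alpha> \<beta> where xab: "x = vadd (vsc \<alpha> (cvec a)) (vsc \<beta> (3*a^2, 2*a, 1, 0))"
      using T(2) unfolding tangent_def pg_line_def by blast
    have "\<beta> \<noteq> 0"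
    proof
      assume "\<beta> = 0"
      then have "\<alpha> \<noteq> 0" "x = vsc \<alpha> (cvec a)" using x(1) xab by auto
      then show False
        using on_C[of \<alpha> "cvec a"] off_C x(2) by (simp add: twisted_cubic_def C_pt_def)
    qed
    then show ?thesis using two_Gamma_planes_through_tangent_point assms(1) x(2) xab by blast
  next
    case infinite
    then obtain \<alpha> \<beta> where xab: "x = vadd (vsc \<alpha> (1, 0, 0, 0)) (vsc \<beta> (0, 1, 0, 0))"
      using T(2) unfolding tangent_inf_def pg_line_def by blast
    then have x_eq: "x = (\<alpha>, \<beta>, 0, 0)" by (simp add: vadd_def vsc_def)
    have "\<beta> \<noteq> 0"
    proof
      assume "\<beta> = 0"
      then have "\<alpha> \<noteq> 0" "x = vsc \<alpha> (1, 0, 0, 0)" using x(1) x_eq by (auto simp: vsc_def vzero_def)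
      then show False
        using on_C[of \<alpha> "(1, 0, 0, 0)"] off_C x(2) by (simp add: twisted_cubic_def C_inf_def)
    qed
    then show ?thesis using two_Gamma_planes_through_tangent_inf_point assms(1) x(2) x_eq by blast
  qed
qed

lemma T_point_iff_two_Gamma_planes:
  fixes P :: "'a::{finite,field} v4 set"
  assumes "(3::'a) \<noteq> 0" "is_point P" "P \<notin> twisted_cubic"
  shows "T_point P \<longleftrightarrow> card {E \<in> Gamma_planes. P \<subseteq> E} = 2"
proof
  assume "card {E \<in> Gamma_planes. P \<subseteq> E} = 2"
  moreover obtain x where "P = pg_point x" using assms(2) unfolding is_point_def by blast
  ultimately obtain T where "T \<in> tangents" "x \<in> T" "P = pg_point x"
    using mem_tangents_if_two_Gamma_planes assms(1) by blast
  moreover from this(1) obtain u w where "T = pg_line u w"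
    unfolding tangents_def tangent_def tangent_inf_def by blast
  ultimately show "T_point P"
    using assms(2,3) pg_point_subset_pg_line_iff unfolding T_point_def by blast
qed (rule two_Gamma_planes_if_T_point[OF assms(1)])

lemma three_neq_zero_if_card_not_dvd:
  assumes "CARD('a::{finite,field}) mod 3 \<noteq> 0"
  shows "(3::'a) \<noteq> 0"
proof
  assume "(3::'a) = 0"
  then have "CHAR('a) dvd 3" using of_nat_eq_0_iff_char_dvd[where 'a='a, of 3] by simp
  moreover have "prime CHAR('a)" by (simp add: prime_CHAR_semidom finite_imp_CHAR_pos)
  ultimately have "CHAR('a) = 3" using primes_dvd_imp_eq[of "CHAR('a)" 3] by simp
  then show False using CHAR_dvd_CARD[where 'a='a] assms by simp
qed

section \<open>Double counting\<close>

lemma sum_card_related_eq_card: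
  assumes "finite A" "finite B" "\<And>y. y \<in> B \<Longrightarrow> card {x \<in> A. R x y} = 1"
  shows "(\<Sum>x\<in>A. card {y \<in> B. R x y}) = card B"
proof -
  have "(\<Sum>x\<in>A. card {y \<in> B. R x y}) = (\<Sum>x\<in>A. \<Sum>y\<in>B. if R x y then 1 else 0)"
    using assms(2) by (simp add: sum.If_cases Int_def)
  also have "\<dots> = (\<Sum>y\<in>B. \<Sum>x\<in>A. if R x y then 1 else 0)" by (rule sum.swap)
  also have "\<dots> = (\<Sum>y\<in>B. card {x \<in> A. R x y})"
    using assms(1) by (simp add: sum.If_cases Int_def)
  also have "\<dots> = card B" using assms(3) by simp
  finally show ?thesis .
qed

lemma sum_eq_sum_level_sets:
  fixes m :: "'x \<Rightarrow> nat"
  assumes "finite A" "\<And>x. x \<in> A \<Longrightarrow> m x \<le> n"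
  shows "sum m A = (\<Sum>k\<le>n. k * card {x \<in> A. m x = k})"
proof -
  have "sum m A = (\<Sum>k\<le>n. sum m {x \<in> A. m x = k})"
    using assms by (intro sum.group[symmetric]) auto
  also have "\<dots> = (\<Sum>k\<le>n. k * card {x \<in> A. m x = k})"
    by (intro sum.cong refl) (simp add: mult.commute)
  finally show ?thesis .
qed

lemma card_eq_sum_level_sets:
  fixes m :: "'x \<Rightarrow> nat"
  assumes "finite A" "\<And>x. x \<in> A \<Longrightarrow> m x \<le> n"
  shows "card A = (\<Sum>k\<le>n. card {x \<in> A. m x = k})"
proof -
  have "card A = (\<Sum>k\<le>n. sum (\<lambda>_. 1) {x \<in> A. m x = k})"
    using assms by (subst card_eq_sum, intro sum.group[symmetric]) auto
  then show ?thesis by simp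
qed

lemma level_sets_if_sum_eq_card:
  fixes m :: "'x \<Rightarrow> nat"
  assumes "finite A" "\<And>x. x \<in> A \<Longrightarrow> m x \<le> 3" "sum m A = card A"
  shows "card {x \<in> A. m x = 1} + 2 * card {x \<in> A. m x = 2} + 3 * card {x \<in> A. m x = 3} = card A"
    and "card {x \<in> A. m x = 0} = card {x \<in> A. m x = 2} + 2 * card {x \<in> A. m x = 3}"
proof -
  have sum_le_3: "(\<Sum>k\<le>3. f k) = f 0 + f 1 + f 2 + f 3" for f :: "nat \<Rightarrow> nat"
    by (simp add: numeral_3_eq_3 numeral_2_eq_2 atMost_Suc)
  have "sum m A = card {x \<in> A. m x = 1} + 2 * card {x \<in> A. m x = 2} + 3 * card {x \<in> A. m x = 3}"
    using sum_eq_sum_level_sets[OF assms(1,2)] unfolding sum_le_3 by simp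
  moreover have "card A = card {x \<in> A. m x = 0} + card {x \<in> A. m x = 1} +
      card {x \<in> A. m x = 2} + card {x \<in> A. m x = 3}"
    using card_eq_sum_level_sets[OF assms(1,2)] unfolding sum_le_3 .
  ultimately show "card {x \<in> A. m x = 1} + 2 * card {x \<in> A. m x = 2} + 3 * card {x \<in> A. m x = 3} = card A"
    and "card {x \<in> A. m x = 0} = card {x \<in> A. m x = 2} + 2 * card {x \<in> A. m x = 3}"
    using assms(3) by linarith+
qed

lemma plane_counts_through_line:
  fixes L :: "'a::{finite,field} v4 set"
  assumes L: "is_line L" and off_C: "\<forall>P\<in>twisted_cubic. \<not> P \<subseteq> L"
    and off_Gamma: "\<forall>E\<in>Gamma_planes. \<not> L \<subseteq> E"
  shows "Pi_1barC L + 2 * Pi_dC 2 L + 3 * Pi_dC 3 L = CARD('a) + 1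
    \<and> Pi_dC 0 L = Pi_dC 2 L + 2 * Pi_dC 3 L"
proof -
  define planes where "planes = {E. is_plane E \<and> L \<subseteq> E}"
  have card_planes: "card planes = CARD('a) + 1"
    unfolding planes_def using card_planes_through_line[OF L] .
  have "(\<Sum>E\<in>planes. card {P \<in> twisted_cubic. P \<subseteq> E}) = card (twisted_cubic :: 'a v4 set set)"
  proof (rule sum_card_related_eq_card)
    fix P :: "'a v4 set"
    assume "P \<in> twisted_cubic"
    then have "card {E. is_plane E \<and> L \<subseteq> E \<and> P \<subseteq> E} = 1"
      using card_planes_through_line_and_point[OF L is_point_if_mem_twisted_cubic] off_C by blast
    moreover have "{E \<in> planes. P \<subseteq> E} = {E. is_plane E \<and> L \<subseteq> E \<and> P \<subseteq> E}"
      unfolding planes_def by blast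
    ultimately show "card {E \<in> planes. P \<subseteq> E} = 1" by simp
  qed simp_all
  then have total: "sum nC planes = card planes"
    unfolding nC_def card_planes card_twisted_cubic .
  have bound: "nC E \<le> 3" if "E \<in> planes" for E
    using nC_le_3 that unfolding planes_def by blast
  have "Pi_dC d L = card {E \<in> planes. nC E = d}" for d
    unfolding Pi_dC_def planes_def by (rule arg_cong[where f=card]) blast
  moreover have "Pi_1barC L = card {E \<in> planes. nC E = 1}"
    unfolding Pi_1barC_def planes_def by (rule arg_cong[where f=card]) (use off_Gamma in blast)
  ultimately show ?thesis
    using level_sets_if_sum_eq_card[OF _ bound total] card_planes by simp
qed

lemma point_counts_on_line:
  fixes L :: "'a::{finite,field} v4 set"
  assumes three: "(3::'a) \<noteq> 0"
    and L: "is_line L" and off_C: "\<forall>P\<in>twisted_cubic. \<not> P \<subseteq> L"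
    and off_Gamma: "\<forall>E\<in>Gamma_planes. \<not> L \<subseteq> E"
  shows "P_muGamma 1 L + 2 * P_T L + 3 * P_muGamma 3 L = CARD('a) + 1
    \<and> P_muGamma 0 L = P_T L + 2 * P_muGamma 3 L"
proof -
  define points where "points = {P. is_point P \<and> P \<subseteq> L}"
  define \<mu> where "\<mu> P = card {E \<in> Gamma_planes. P \<subseteq> E}" for P :: "'a v4 set"
  have card_points: "card points = CARD('a) + 1"
    unfolding points_def using card_points_on_line[OF L] .
  have points_off_C: "P \<notin> twisted_cubic" if "P \<in> points" for P
    using that off_C unfolding points_def by blast
  have "(\<Sum>P\<in>points. card {E \<in> Gamma_planes. P \<subseteq> E}) = card (Gamma_planes :: 'a v4 set set)"
  proof (rule sum_card_related_eq_card)
    fix E :: "'a v4 set"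
    assume "E \<in> Gamma_planes"
    then have "card {P. is_point P \<and> P \<subseteq> L \<and> P \<subseteq> E} = 1"
      using card_points_on_line_in_plane[OF L is_plane_if_mem_Gamma_planes] off_Gamma by blast
    moreover have "{P \<in> points. P \<subseteq> E} = {P. is_point P \<and> P \<subseteq> L \<and> P \<subseteq> E}"
      unfolding points_def by blast
    ultimately show "card {P \<in> points. P \<subseteq> E} = 1" by simp
  qed simp_all
  then have total: "sum \<mu> points = card points"
    unfolding \<mu>_def card_points card_Gamma_planes .
  have bound: "\<mu> P \<le> 3" if "P \<in> points" for P
    using card_Gamma_planes_through_point_le_3[OF three] that unfolding \<mu>_def points_def by blast
  have "P_muGamma k L = card {P \<in> points. \<mu> P = k}" for k
    unfolding P_muGamma_def mu_Gamma_point_def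
    by (rule arg_cong[where f=card]) (use points_off_C in \<open>auto simp: points_def \<mu>_def\<close>)
  moreover have "P_T L = card {P \<in> points. \<mu> P = 2}"
  proof -
    have "T_point P \<longleftrightarrow> \<mu> P = 2" if "P \<in> points" for P
      using T_point_iff_two_Gamma_planes[OF three] points_off_C[OF that] that
      unfolding points_def \<mu>_def by blast
    moreover have "T_point P \<Longrightarrow> is_point P" for P unfolding T_point_def by blast
    ultimately show ?thesis
      unfolding P_T_def by (intro arg_cong[where f=card]) (auto simp: points_def)
  qed
  ultimately show ?thesis
    using level_sets_if_sum_eq_card[OF _ bound total] card_points by simp
qed

theorem proposition3p7:
  fixes emb :: "'a::{finite,field} \<Rightarrow> 'b::{finite,field}"
    and Orb :: "'a v4 set set" and L :: "'a v4 set"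
  assumes "field_embedding emb"
    and "CARD('b) = CARD('a) ^ 2"
    and "CARD('a) \<ge> 5"
    and "is_Gq_line_orbit Orb"
    and "\<forall>M\<in>Orb. EnGamma_line emb M"
    and "L \<in> Orb"
  shows "Pi_1barC L + 2 * Pi_dC 2 L + 3 * Pi_dC 3 L = CARD('a) + 1
       \<and> Pi_dC 0 L = Pi_dC 2 L + 2 * Pi_dC 3 L
       \<and> (CARD('a) mod 3 \<noteq> 0 \<longrightarrow>
            P_muGamma 1 L + 2 * P_T L + 3 * P_muGamma 3 L = CARD('a) + 1
          \<and> P_muGamma 0 L = P_T L + 2 * P_muGamma 3 L)"
proof -
  have "EnGamma_line emb L" using assms(5,6) by blast
  then have L: "is_line L" and off_C: "\<forall>P\<in>twisted_cubic. \<not> P \<subseteq> L"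
    and off_Gamma: "\<forall>E\<in>Gamma_planes. \<not> L \<subseteq> E"
    unfolding EnGamma_line_def by blast+
  show ?thesis
    using plane_counts_through_line[OF L off_C off_Gamma]
      point_counts_on_line[OF three_neq_zero_if_card_not_dvd L off_C off_Gamma]
    by blast
qed

end
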